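(* For an undirected graph $G=(V,E)$ with edge capacities $u_e\in\mathbb{Z}_{\ge0}$ for all $e\in E$, terminals $s_1,s_2,t_1,t_2$, and nonnegative integers $k_1,k_2$, it holds that $2\,c_{2k_1,2k_2}(G)\ge c_{k_1,k_2}(G)$.
   Context: $\delta(S)$ denotes the set of edges with exactly one endpoint in $S$. Say $S\subseteq V$ separates commodity $i$ if exactly one of $s_i,t_i$ lies in $S$. For nonnegative integers $a,b$ define $\mathrm{dem}_{a,b}(S)=a$ if $S$ separates commodity 1 but not commodity 2, $=b$ if $S$ separates commodity 2 but not commodity 1, $=a+b$ if $S$ separates both commodities, and $=0$ otherwise. Define $c_{a,b}(S)=\max\{x\in\mathbb{R}_{\ge0}: \exists\, n(e)\in\mathbb{Z}_{\ge0}\ (e\in\delta(S))\text{ with } n(e)x\le u_e\ \forall e\in\delta(S),\ \sum_{e\in\delta(S)}n(e)\ge \mathrm{dem}_{a,b}(S)\}$ and $c_{a,b}(G)=\min\{c_{a,b}(S): S\subseteq V,\ \mathrm{dem}_{a,b}(S)\neq 0\}$. *)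

theory Defs
  imports "HOL-Library.Extended_Real"
begin

text \<open>An undirected (multi)graph: finite vertex set V, finite edge set E, each edge
  e has endpoints ep e = (x, y) (orientation irrelevant). Capacities u e :: nat.\<close>

definition cut :: "'e set \<Rightarrow> ('e \<Rightarrow> 'v \<times> 'v) \<Rightarrow> 'v set \<Rightarrow> 'e set" where
  "cut E ep S = {e \<in> E. (fst (ep e) \<in> S) \<noteq> (snd (ep e) \<in> S)}"

definition separates :: "'v set \<Rightarrow> 'v \<Rightarrow> 'v \<Rightarrow> bool" where
  "separates S s t \<longleftrightarrow> (s \<in> S) \<noteq> (t \<in> S)"

definition dem :: "nat \<Rightarrow> nat \<Rightarrow> 'v \<Rightarrow> 'v \<Rightarrow> 'v \<Rightarrow> 'v \<Rightarrow> 'v set \<Rightarrow> nat" where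
  "dem a b s1 t1 s2 t2 S =
     (if separates S s1 t1 \<and> \<not> separates S s2 t2 then a
      else if separates S s2 t2 \<and> \<not> separates S s1 t1 then b
      else if separates S s1 t1 \<and> separates S s2 t2 then a + b
      else 0)"

text \<open>c_{a,b}(S): maximum of the feasible x (as an extended real; the maximum of an
  empty set is -\<infinity>, which only arises when the cut is empty).\<close>
definition cap_cut :: "'e set \<Rightarrow> ('e \<Rightarrow> 'v \<times> 'v) \<Rightarrow> ('e \<Rightarrow> nat) \<Rightarrow> nat \<Rightarrow> nat
    \<Rightarrow> 'v \<Rightarrow> 'v \<Rightarrow> 'v \<Rightarrow> 'v \<Rightarrow> 'v set \<Rightarrow> ereal" where
  "cap_cut E ep u a b s1 t1 s2 t2 S =
     Sup (ereal ` {x::real. x \<ge> 0 \<and> (\<exists>n :: 'e \<Rightarrow> nat.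
        (\<forall>e \<in> cut E ep S. real (n e) * x \<le> real (u e)) \<and>
        (\<Sum>e \<in> cut E ep S. n e) \<ge> dem a b s1 t1 s2 t2 S)})"

text \<open>c_{a,b}(G): minimum over vertex subsets with nonzero demand (Inf of empty = \<infinity>).\<close>
definition cap_graph :: "'v set \<Rightarrow> 'e set \<Rightarrow> ('e \<Rightarrow> 'v \<times> 'v) \<Rightarrow> ('e \<Rightarrow> nat) \<Rightarrow> nat \<Rightarrow> nat
    \<Rightarrow> 'v \<Rightarrow> 'v \<Rightarrow> 'v \<Rightarrow> 'v \<Rightarrow> ereal" where
  "cap_graph V E ep u a b s1 t1 s2 t2 =
     Inf (cap_cut E ep u a b s1 t1 s2 t2 ` {S. S \<subseteq> V \<and> dem a b s1 t1 s2 t2 S \<noteq> 0})"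

end

theory Submission
  imports Defs
begin

text \<open>Scaling both demands by m scales the demand of every cut by m, so the set of cuts
  with nonzero demand does not change. On a fixed cut, a choice of multiplicities n(e) that
  supports the value x for the original demand, taken m times over, supports x / m for the
  scaled demand; hence c_{ma,mb}(S) \<ge> c_{a,b}(S) / m cut by cut, and the minimum over the
  finitely many cuts inherits the bound.\<close>

definition feasible_loads :: "'e set \<Rightarrow> ('e \<Rightarrow> 'v \<times> 'v) \<Rightarrow> ('e \<Rightarrow> nat) \<Rightarrow> nat \<Rightarrow> 'v set \<Rightarrow> real set"
  where "feasible_loads E ep u d S = {x. x \<ge> 0 \<and> (\<exists>n :: 'e \<Rightarrow> nat.
           (\<forall>e \<in> cut E ep S. real (n e) * x \<le> real (u e)) \<and> (\<Sum>e \<in> cut E ep S. n e) \<ge> d)}"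

lemma cap_cut_eq_Sup_feasible_loads:
  "cap_cut E ep u a b s1 t1 s2 t2 S =
     Sup (ereal ` feasible_loads E ep u (dem a b s1 t1 s2 t2 S) S)"
  by (simp add: cap_cut_def feasible_loads_def)

lemma dem_scale: "dem (m * a) (m * b) s1 t1 s2 t2 S = m * dem a b s1 t1 s2 t2 S"
  by (simp add: dem_def algebra_simps)

lemma feasible_loads_scale:
  assumes "0 < m" and "x \<in> feasible_loads E ep u d S"
  shows "x / m \<in> feasible_loads E ep u (m * d) S"
proof -
  obtain n where x0: "x \<ge> 0"
    and load: "\<forall>e \<in> cut E ep S. real (n e) * x \<le> real (u e)"
    and demand: "(\<Sum>e \<in> cut E ep S. n e) \<ge> d"
    using assms(2) unfolding feasible_loads_def by blast
  have "\<forall>e \<in> cut E ep S. real (m * n e) * (x / m) \<le> real (u e)"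
    using load assms(1) by simp
  moreover have "(\<Sum>e \<in> cut E ep S. m * n e) \<ge> m * d"
    using demand by (simp add: sum_distrib_left[symmetric])
  moreover have "x / m \<ge> 0"
    using x0 by simp
  ultimately show ?thesis
    unfolding feasible_loads_def mem_Collect_eq by (intro conjI exI[of _ "\<lambda>e. m * n e"])
qed

lemma cap_cut_le_scaled:
  assumes "0 < m"
  shows "cap_cut E ep u a b s1 t1 s2 t2 S
           \<le> ereal (real m) * cap_cut E ep u (m * a) (m * b) s1 t1 s2 t2 S"
  unfolding cap_cut_eq_Sup_feasible_loads dem_scale
proof (rule Sup_least, clarify)
  let ?F = "feasible_loads E ep u (m * dem a b s1 t1 s2 t2 S) S"
  fix x assume "x \<in> feasible_loads E ep u (dem a b s1 t1 s2 t2 S) S"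
  then have "ereal (x / m) \<le> Sup (ereal ` ?F)"
    using assms by (intro Sup_upper imageI feasible_loads_scale)
  then have "ereal (real m) * ereal (x / m) \<le> ereal (real m) * Sup (ereal ` ?F)"
    by (rule ereal_mult_left_mono) simp
  moreover have "ereal (real m) * ereal (x / m) = ereal x"
    using assms by simp
  ultimately show "ereal x \<le> ereal (real m) * Sup (ereal ` ?F)"
    by simp
qed

lemma INF_le_mult_INF_finite:
  fixes f g :: "'a \<Rightarrow> ereal"
  assumes "finite A" and "0 < c" and "\<And>x. x \<in> A \<Longrightarrow> g x \<le> c * f x"
  shows "Inf (g ` A) \<le> c * Inf (f ` A)"
proof (cases "A = {}")
  case True
  then show ?thesis using assms(2) by (simp add: top_ereal_def)
next
  case False
  have "Inf (f ` A) \<in> f ` A"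
    using assms(1) False by (simp add: cInf_eq_Min)
  then obtain x where x: "x \<in> A" "Inf (f ` A) = f x"
    by blast
  have "Inf (g ` A) \<le> g x"
    using x(1) by (rule INF_lower)
  also have "\<dots> \<le> c * Inf (f ` A)"
    using assms(3)[OF x(1)] x(2) by simp
  finally show ?thesis .
qed

theorem mainTheorem4:
  fixes V :: "'v set" and E :: "'e set" and ep :: "'e \<Rightarrow> 'v \<times> 'v"
    and u :: "'e \<Rightarrow> nat" and s1 t1 s2 t2 :: 'v and k1 k2 :: nat
  assumes "finite V" and "finite E"
    and "\<forall>e \<in> E. fst (ep e) \<in> V \<and> snd (ep e) \<in> V"
    and "s1 \<in> V" and "t1 \<in> V" and "s2 \<in> V" and "t2 \<in> V"
  shows "2 * cap_graph V E ep u (2 * k1) (2 * k2) s1 t1 s2 t2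
           \<ge> cap_graph V E ep u k1 k2 s1 t1 s2 t2"
proof -
  let ?cuts = "{S. S \<subseteq> V \<and> dem k1 k2 s1 t1 s2 t2 S \<noteq> 0}"
  have same_cuts: "{S. S \<subseteq> V \<and> dem (2 * k1) (2 * k2) s1 t1 s2 t2 S \<noteq> 0} = ?cuts"
    by (simp add: dem_scale)
  have finite_cuts: "finite ?cuts"
    using assms(1) by (simp add: finite_subset[of _ "Pow V"] subset_eq)
  have cut_bound: "cap_cut E ep u k1 k2 s1 t1 s2 t2 S
                   \<le> 2 * cap_cut E ep u (2 * k1) (2 * k2) s1 t1 s2 t2 S" for S
    using cap_cut_le_scaled[of 2] by simp
  show ?thesis
    unfolding cap_graph_def same_cuts
    by (rule INF_le_mult_INF_finite[OF finite_cuts _ cut_bound]) simp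
qed

end
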